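(* For real $u,w$ and an integer $n\ge1$ let $g_n(u,w):=\sum_{i=1}^n i\,w^{i-1}u^{n-i}$. For every natural number $m\ge1$: (i) $$g_{4m+1}(w,u)-g_{4m+1}(u,w)=\sum_{i=0}^{2m-1}(4m-2i)(uw)^i\left(u^{4m-2i}-w^{4m-2i}\right)$$ $$=(u+w)\sum_{i=0}^{m-1}(4m-2-4i)\left(u^{4m-1-4i}-w^{4m-1-4i}\right)(uw)^{2i}+2\sum_{i=0}^{m-1}\left(u^{4m-4i}-w^{4m-4i}\right)(uw)^{2i};$$ (ii) $$g_{4m+3}(w,u)-g_{4m+3}(u,w)=\sum_{i=0}^{2m}(4m+2-2i)(uw)^i\left(u^{4m+2-2i}-w^{4m+2-2i}\right)$$ $$=(u+w)\sum_{i=0}^{m-1}(4m-4i)\left(u^{4m+1-4i}-w^{4m+1-4i}\right)(uw)^{2i}+2\sum_{i=0}^{m}\left(u^{4m+2-4i}-w^{4m+2-4i}\right)(uw)^{2i}.$$ Furthermore, let $\beta>0$, $k>0$, and $w=\delta(u)$ with $\delta$ the involution defined in the context. Then for all odd integers $n\ge3$: (a) if $-k<u_0<0$, then $g_n(u,w)>g_n(w,u)$ for all $u\in(0,u_1)$; (b) if $u_0<-k$, then $g_n(u,w)<g_n(w,u)$ for all $u\in(0,k)$.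
   Context: $\Phi(u)=\beta\left(-\frac{u^4}{4}+\frac{k+u_0}{3}u^3-\frac{ku_0}{2}u^2\right)$. Case $-k<u_0<0$: $u_1$ is the unique point of $(0,k)$ with $\Phi(u_1)=\Phi(u_0)$, and for $u\in(0,u_1)$, $\delta(u)$ is the unique $w\in(u_0,0)$ with $\Phi(w)=\Phi(u)$. Case $u_0<-k$: $w_2$ is the unique point of $(u_0,0)$ with $\Phi(w_2)=\Phi(k)$, and for $u\in(0,k)$, $\delta(u)$ is the unique $w\in(w_2,0)$ with $\Phi(w)=\Phi(u)$. *)

theory Defs
  imports Complex_Main
begin

definition g :: "nat \<Rightarrow> real \<Rightarrow> real \<Rightarrow> real" where
  "g n u w = (\<Sum>i=1..n. real i * w ^ (i - 1) * u ^ (n - i))"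

definition Phi :: "real \<Rightarrow> real \<Rightarrow> real \<Rightarrow> real \<Rightarrow> real" where
  "Phi \<beta> k u0 u = \<beta> * (- (u ^ 4) / 4 + (k + u0) / 3 * u ^ 3 - k * u0 / 2 * u ^ 2)"

text \<open>Case -k < u0 < 0: the unique point of (0,k) with the same Phi-value as u0.\<close>
definition u1 :: "real \<Rightarrow> real \<Rightarrow> real \<Rightarrow> real" where
  "u1 \<beta> k u0 = (THE v. v \<in> {0<..<k} \<and> Phi \<beta> k u0 v = Phi \<beta> k u0 u0)"

text \<open>Case u0 < -k: the unique point of (u0,0) with the same Phi-value as k.\<close>
definition w2 :: "real \<Rightarrow> real \<Rightarrow> real \<Rightarrow> real" where
  "w2 \<beta> k u0 = (THE v. v \<in> {u0<..<0} \<and> Phi \<beta> k u0 v = Phi \<beta> k u0 k)"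

definition delta :: "real \<Rightarrow> real \<Rightarrow> real \<Rightarrow> real \<Rightarrow> real" where
  "delta \<beta> k u0 u =
     (if u0 < - k
      then (THE w. w \<in> {w2 \<beta> k u0<..<0} \<and> Phi \<beta> k u0 w = Phi \<beta> k u0 u)
      else (THE w. w \<in> {u0<..<0} \<and> Phi \<beta> k u0 w = Phi \<beta> k u0 u))"

end

theory Submission
  imports Defs
begin

text \<open>
  Pairing the summands of g_n(w,u) - g_n(u,w) symmetrically about the middle index, and then
  pairing consecutive terms by means of (u+w)(u^(e+1) - w^(e+1)) = (u^(e+2) - w^(e+2)) + uw(u^e - w^e),
  writes the difference for odd n as a sum of terms
  ((u+w) c (u^(e+1) - w^(e+1)) + 2 (u^(e+2) - w^(e+2))) (uw)^(2i) with c >= 0; this gives (i), (ii).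
  If |w| < u every such term is nonnegative and the first one is positive, so g_n(u,w) < g_n(w,u);
  as g_n is homogeneous of even degree n - 1, the substitution (u,w) -> (-w,-u) covers |u| < -w.
  Finally Phi increases on [0,k], decreases on [u0,0], and Phi(-x) - Phi(x) = -2 beta (k+u0) x^3 / 3,
  so the sign of k + u0 decides on which side of -u the point delta(u) lies.
\<close>

lemma sum_lessThan_Suc_double_fold:
  fixes f :: "nat \<Rightarrow> 'a::comm_monoid_add"
  shows "(\<Sum>a<Suc (2*p). f a) = (\<Sum>j<p. f j + f (2*p - j)) + f p"
proof (induction p arbitrary: f)
  case (Suc p)
  have "(\<Sum>a<Suc (2 * Suc p). f a) = f 0 + (\<Sum>a<Suc (Suc (2*p)). f (Suc a))"
    by (subst sum.lessThan_Suc_shift) simp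
  also have "\<dots> = f 0 + (\<Sum>j<p. f (Suc j) + f (Suc (2*p - j))) + f (Suc p) + f (Suc (Suc (2*p)))"
    using Suc.IH[of "\<lambda>a. f (Suc a)"] by (simp add: ac_simps)
  also have "\<dots> = (\<Sum>j<Suc p. f j + f (2 * Suc p - j)) + f (Suc p)"
    by (subst sum.lessThan_Suc_shift) (simp add: Suc_diff_le ac_simps)
  finally show ?case .
qed simp

lemma sum_lessThan_double_pairs:
  fixes f :: "nat \<Rightarrow> 'a::comm_monoid_add"
  shows "(\<Sum>j<2*q. f j) = (\<Sum>i<q. f (2*i) + f (2*i+1))"
  by (induction q) (simp_all add: ac_simps)

lemma power_less_power_if_abs_less:
  fixes w u :: "'a::linordered_idom"
  assumes "\<bar>w\<bar> < u" "0 < N"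
  shows "w^N < u^N"
proof -
  have "w^N \<le> \<bar>w\<bar>^N" by (metis abs_ge_self power_abs)
  also have "\<dots> < u^N" using assms by (simp add: power_strict_mono)
  finally show ?thesis .
qed

lemma strict_antimono_on_less:
  fixes f :: "'a::linorder \<Rightarrow> 'b::linorder"
  assumes "strict_antimono_on S f" "x \<in> S" "y \<in> S"
  shows "f x < f y \<longleftrightarrow> y < x"
  using assms by (cases x y rule: linorder_cases) (auto dest: monotone_onD)

lemma g_swap_diff:
  "g n w u - g n u w = (\<Sum>a<n. (2 * real a + 1 - real n) * u^a * w^(n-1-a))"
proof -
  have gwu: "g n w u = (\<Sum>a<n. (real a + 1) * u^a * w^(n-1-a))"
    unfolding g_def by (simp add: sum.atLeast1_atMost_eq add.commute)
  have "g n u w = (\<Sum>a<n. (real a + 1) * w^a * u^(n-1-a))"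
    unfolding g_def by (simp add: sum.atLeast1_atMost_eq add.commute)
  also have "\<dots> = (\<Sum>a<n. (real (n - Suc a) + 1) * w^(n - Suc a) * u^(n-1-(n - Suc a)))"
    by (rule sum.nat_diff_reindex[symmetric])
  also have "\<dots> = (\<Sum>a<n. (real n - real a) * u^a * w^(n-1-a))"
    by (rule sum.cong) (auto simp: of_nat_diff Suc_diff_Suc)
  finally show ?thesis by (simp add: gwu sum_subtractf[symmetric] algebra_simps)
qed

lemma g_swap_diff_odd:
  "g (Suc (2*p)) w u - g (Suc (2*p)) u w
   = (\<Sum>j<p. (2 * real p - 2 * real j) * (u*w)^j * (u^(2*p-2*j) - w^(2*p-2*j)))"
proof -
  define t where "t a = (2 * real a - 2 * real p) * u^a * w^(2*p-a)" for a
  have "g (Suc (2*p)) w u - g (Suc (2*p)) u w = (\<Sum>a<Suc (2*p). t a)"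
    unfolding g_swap_diff t_def by simp
  also have "\<dots> = (\<Sum>j<p. t j + t (2*p - j))"
    unfolding sum_lessThan_Suc_double_fold by (simp add: t_def)
  also have "\<dots> = (\<Sum>j<p. (2 * real p - 2 * real j) * (u*w)^j * (u^(2*p-2*j) - w^(2*p-2*j)))"
  proof (rule sum.cong)
    fix j assume j: "j \<in> {..<p}"
    obtain e where e: "2*p - 2*j = e" by blast
    with j have idx: "2*p - j = j + e" "2*p - (j + e) = j" "2 * real p - 2 * real j = real e"
      "2 * real j - 2 * real p = - real e" "2 * real (j + e) - 2 * real p = real e"
      by (auto simp: of_nat_diff)
    show "t j + t (2*p - j) = (2 * real p - 2 * real j) * (u*w)^j * (u^(2*p-2*j) - w^(2*p-2*j))"
      unfolding t_def e idx by (simp add: power_add power_mult_distrib algebra_simps)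
  qed simp
  finally show ?thesis .
qed

lemma swap_summand_pair:
  fixes u w :: real
  assumes "2*i + 1 \<le> p"
  shows "(2 * real p - 2 * real (2*i)) * (u*w)^(2*i) * (u^(2*p-2*(2*i)) - w^(2*p-2*(2*i)))
       + (2 * real p - 2 * real (2*i+1)) * (u*w)^(2*i+1) * (u^(2*p-2*(2*i+1)) - w^(2*p-2*(2*i+1)))
       = (u + w) * ((2 * real p - 2 - 4 * real i) * (u^(2*p-1-4*i) - w^(2*p-1-4*i)) * (u*w)^(2*i))
       + 2 * ((u^(2*p-4*i) - w^(2*p-4*i)) * (u*w)^(2*i))"
proof -
  obtain e where e: "2*p - 4*i - 2 = e" by blast
  with assms have idx: "2*p - 2*(2*i) = e + 2" "2*p - 2*(2*i+1) = e" "2*p - 1 - 4*i = e + 1"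
    "2*p - 4*i = e + 2" "2 * real p - 2 * real (2*i) = real e + 2"
    "2 * real p - 2 * real (2*i+1) = real e" "2 * real p - 2 - 4 * real i = real e"
    by (auto simp: of_nat_diff)
  show ?thesis unfolding idx by (simp add: algebra_simps)
qed

lemma swap_sum_regroup:
  fixes u w :: real
  shows "(\<Sum>j<p. (2 * real p - 2 * real j) * (u*w)^j * (u^(2*p-2*j) - w^(2*p-2*j)))
       = (\<Sum>i<(p+1) div 2.
            (u + w) * ((2 * real p - 2 - 4 * real i) * (u^(2*p-1-4*i) - w^(2*p-1-4*i)) * (u*w)^(2*i))
          + 2 * ((u^(2*p-4*i) - w^(2*p-4*i)) * (u*w)^(2*i)))" (is "_ = ?rhs")
proof -
  define t where "t j = (2 * real p - 2 * real j) * (u*w)^j * (u^(2*p-2*j) - w^(2*p-2*j))" for j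
  have "(\<Sum>j<p. t j) = (\<Sum>j<2*((p+1) div 2). t j)"
  proof (cases "even p")
    case False
    \<comment> \<open>the padding summand \<open>t p\<close> has coefficient \<open>0\<close>\<close>
    then have "2*((p+1) div 2) = Suc p" by presburger
    then show ?thesis by (simp add: t_def)
  qed simp
  also have "\<dots> = (\<Sum>i<(p+1) div 2. t (2*i) + t (2*i+1))"
    by (rule sum_lessThan_double_pairs)
  also have "\<dots> = ?rhs"
    by (rule sum.cong[OF refl], unfold t_def, rule swap_summand_pair) auto
  finally show ?thesis by (simp only: t_def)
qed

lemma g_swap_diff_4m1:
  fixes u w :: real
  assumes "1 \<le> m"
  shows "g (4*m+1) w u - g (4*m+1) u w
        = (\<Sum>i=0..2*m-1. (4 * real m - 2 * real i) * (u*w)^i * (u^(4*m-2*i) - w^(4*m-2*i)))"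
    and "(\<Sum>i=0..2*m-1. (4 * real m - 2 * real i) * (u*w)^i * (u^(4*m-2*i) - w^(4*m-2*i)))
        = (u + w) * (\<Sum>i=0..m-1. (4 * real m - 2 - 4 * real i)
                         * (u^(4*m-1-4*i) - w^(4*m-1-4*i)) * (u*w)^(2*i))
          + 2 * (\<Sum>i=0..m-1. (u^(4*m-4*i) - w^(4*m-4*i)) * (u*w)^(2*i))"
  using assms g_swap_diff_odd[of "2*m" w u] swap_sum_regroup[of "2*m" u w]
  by (simp_all add: atLeast0AtMost lessThan_Suc_atMost[symmetric] sum.distrib sum_distrib_left
      del: lessThan_Suc_atMost)

lemma g_swap_diff_4m3:
  fixes u w :: real
  assumes "1 \<le> m"
  shows "g (4*m+3) w u - g (4*m+3) u w
        = (\<Sum>i=0..2*m. (4 * real m + 2 - 2 * real i) * (u*w)^i * (u^(4*m+2-2*i) - w^(4*m+2-2*i)))"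
    and "(\<Sum>i=0..2*m. (4 * real m + 2 - 2 * real i) * (u*w)^i * (u^(4*m+2-2*i) - w^(4*m+2-2*i)))
        = (u + w) * (\<Sum>i=0..m-1. (4 * real m - 4 * real i)
                         * (u^(4*m+1-4*i) - w^(4*m+1-4*i)) * (u*w)^(2*i))
          + 2 * (\<Sum>i=0..m. (u^(4*m+2-4*i) - w^(4*m+2-4*i)) * (u*w)^(2*i))"
  using assms g_swap_diff_odd[of "Suc (2*m)" w u] swap_sum_regroup[of "Suc (2*m)" u w]
  by (simp_all add: atLeast0AtMost lessThan_Suc_atMost[symmetric] sum.distrib sum_distrib_left
      add.commute[of 2 "4 * real m"] numeral_3_eq_3 del: lessThan_Suc_atMost)

lemma g_swap_less:
  fixes u w :: real
  assumes "\<bar>w\<bar> < u" "odd n" "3 \<le> n"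
  shows "g n u w < g n w u"
proof -
  obtain p where n: "n = Suc (2*p)"
    using assms(2) by (metis oddE Suc_eq_plus1)
  with assms(3) have "1 \<le> p" by simp
  have pos: "0 < u^N - w^N" if "0 < N" for N
    using power_less_power_if_abs_less[OF assms(1) that] by simp
  have "0 < u + w" using assms(1) by linarith
  define r where "r i = (u + w) * ((2 * real p - 2 - 4 * real i) * (u^(2*p-1-4*i) - w^(2*p-1-4*i))
    * (u*w)^(2*i)) + 2 * ((u^(2*p-4*i) - w^(2*p-4*i)) * (u*w)^(2*i))" for i
  have "0 < (\<Sum>i<(p+1) div 2. r i)"
  proof (rule sum_pos2)
    show "0 \<in> {..<(p+1) div 2}" using \<open>1 \<le> p\<close> by simp
    show "0 < r 0"
      unfolding r_def using pos[of "2*p-1"] pos[of "2*p"] \<open>0 < u + w\<close> \<open>1 \<le> p\<close>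
      by (intro add_nonneg_pos mult_nonneg_nonneg) simp_all
  next
    fix i assume "i \<in> {..<(p+1) div 2}"
    then have "0 \<le> 2 * real p - 2 - 4 * real i" "0 < 2*p-1-4*i" "0 < 2*p-4*i" by auto
    moreover have "0 \<le> (u*w)^(2*i)" by (simp add: power_mult)
    ultimately show "0 \<le> r i"
      unfolding r_def using pos[of "2*p-1-4*i"] pos[of "2*p-4*i"] \<open>0 < u + w\<close>
      by (simp add: add_nonneg_nonneg mult_nonneg_nonneg less_imp_le)
  qed simp
  then show ?thesis
    unfolding n r_def using g_swap_diff_odd[of p w u] swap_sum_regroup[of p u w] by simp
qed

lemma g_minus_minus: "g n (- u) (- w) = (-1)^(n-1) * g n u w"
  unfolding g_def sum_distrib_left
proof (rule sum.cong)
  fix i assume "i \<in> {1..n}"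
  then have "(-1::real)^(i-1) * (-1)^(n-i) = (-1)^(n-1)"
    by (simp add: power_add[symmetric])
  then show "real i * (- w)^(i-1) * (- u)^(n-i) = (-1)^(n-1) * (real i * w^(i-1) * u^(n-i))"
    by (simp add: power_minus[of w] power_minus[of u] ac_simps)
qed simp

lemma Phi_has_real_derivative:
  "(Phi \<beta> k u0 has_real_derivative - \<beta> * x * (x - k) * (x - u0)) (at x)"
proof -
  have "(Phi \<beta> k u0 has_real_derivative
     \<beta> * (- (4 * x^3) / 4 + (k + u0) / 3 * (3 * x^2) - k * u0 / 2 * (2 * x))) (at x)"
    unfolding Phi_def[abs_def] by (auto intro!: derivative_eq_intros simp: power2_eq_square)
  moreover have "\<beta> * (- (4 * x^3) / 4 + (k + u0) / 3 * (3 * x^2) - k * u0 / 2 * (2 * x))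
     = - \<beta> * x * (x - k) * (x - u0)" by (simp add: algebra_simps power2_eq_square power3_eq_cube)
  ultimately show ?thesis by simp
qed

lemma continuous_on_Phi: "continuous_on S (Phi \<beta> k u0)"
  unfolding Phi_def[abs_def] by (intro continuous_intros) auto

lemma Phi_zero [simp]: "Phi \<beta> k u0 0 = 0"
  by (simp add: Phi_def)

lemma Phi_minus: "Phi \<beta> k u0 (- x) - Phi \<beta> k u0 x = - 2 * \<beta> * (k + u0) / 3 * x^3"
  unfolding Phi_def by (simp add: power_minus_odd field_simps)

lemma Phi_k_minus_Phi_u0: "Phi \<beta> k u0 k - Phi \<beta> k u0 u0 = \<beta> / 12 * (k + u0) * (k - u0)^3"
  unfolding Phi_def
  by (simp add: field_simps) (simp add: algebra_simps power2_eq_square power3_eq_cube power4_eq_xxxx)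

lemma strict_mono_on_Phi:
  assumes "0 < \<beta>" "u0 < 0"
  shows "strict_mono_on {0..k} (Phi \<beta> k u0)"
proof (rule strict_mono_onI)
  fix x y assume "x \<in> {0..k}" "y \<in> {0..k}" "x < y"
  then show "Phi \<beta> k u0 x < Phi \<beta> k u0 y"
  proof (intro DERIV_pos_imp_increasing_open[OF \<open>x < y\<close> _ continuous_on_Phi])
    fix t assume "x < t" "t < y"
    with assms \<open>x \<in> {0..k}\<close> \<open>y \<in> {0..k}\<close> have "0 < \<beta> * t * (k - t) * (t - u0)"
      by (intro mult_pos_pos) auto
    then show "\<exists>d. (Phi \<beta> k u0 has_real_derivative d) (at t) \<and> 0 < d"
      using Phi_has_real_derivative by (metis minus_diff_eq mult_minus_left mult_minus_right)
  qed
qed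

lemma strict_antimono_on_Phi:
  assumes "0 < \<beta>" "0 < k"
  shows "strict_antimono_on {u0..0} (Phi \<beta> k u0)"
proof (rule monotone_onI)
  fix x y assume "x \<in> {u0..0}" "y \<in> {u0..0}" "x < y"
  then show "Phi \<beta> k u0 y < Phi \<beta> k u0 x"
  proof (intro DERIV_neg_imp_decreasing_open[OF \<open>x < y\<close> _ continuous_on_Phi])
    fix t assume "x < t" "t < y"
    with assms \<open>x \<in> {u0..0}\<close> \<open>y \<in> {u0..0}\<close> have "0 < \<beta> * (- t) * (k - t) * (t - u0)"
      by (intro mult_pos_pos) auto
    then show "\<exists>d. (Phi \<beta> k u0 has_real_derivative d) (at t) \<and> d < 0"
      using Phi_has_real_derivative
      by (metis minus_diff_eq mult.assoc mult_minus_left mult_minus_right neg_0_less_iff_less)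
  qed
qed

lemma Phi_neg_branch:
  assumes "0 < \<beta>" "0 < k" "u0 \<le> a" "a < 0" "0 < c" "c < Phi \<beta> k u0 a"
  obtains w where "a < w" "w < 0" "Phi \<beta> k u0 w = c"
    and "(THE w. w \<in> {a<..<0} \<and> Phi \<beta> k u0 w = c) = w"
proof -
  obtain w where w: "a \<le> w" "w \<le> 0" "Phi \<beta> k u0 w = c"
    using IVT2'[of "Phi \<beta> k u0" 0 c a, OF _ _ _ continuous_on_Phi] assms by auto
  with assms have "a < w" "w < 0" by (auto simp: le_less)
  moreover have "inj_on (Phi \<beta> k u0) {u0..0}"
    using strict_antimono_on_Phi[OF assms(1,2)] strict_antimono_iff_antimono by blast
  then have "(THE w. w \<in> {a<..<0} \<and> Phi \<beta> k u0 w = c) = w"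
    using \<open>a < w\<close> \<open>w < 0\<close> w(3) assms(3) by (intro the_equality) (auto dest: inj_onD)
  ultimately show thesis using that w(3) by blast
qed

lemma Phi_pos_branch:
  assumes "0 < \<beta>" "0 < k" "u0 < 0" "0 < c" "c < Phi \<beta> k u0 k"
  obtains v where "0 < v" "v < k" "Phi \<beta> k u0 v = c"
    and "(THE v. v \<in> {0<..<k} \<and> Phi \<beta> k u0 v = c) = v"
proof -
  obtain v where v: "0 \<le> v" "v \<le> k" "Phi \<beta> k u0 v = c"
    using IVT'[of "Phi \<beta> k u0" 0 c k, OF _ _ _ continuous_on_Phi] assms by auto
  with assms have "0 < v" "v < k" by (auto simp: le_less)
  moreover have "inj_on (Phi \<beta> k u0) {0..k}"
    using strict_mono_on_Phi[OF assms(1,3)] by (rule strict_mono_on_imp_inj_on)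
  then have "(THE v. v \<in> {0<..<k} \<and> Phi \<beta> k u0 v = c) = v"
    using \<open>0 < v\<close> \<open>v < k\<close> v(3) by (intro the_equality) (auto dest: inj_onD)
  ultimately show thesis using that v(3) by blast
qed

lemma less_minus_delta:
  assumes "0 < \<beta>" "0 < k" "- k < u0" "u0 < 0" "0 < u" "u < u1 \<beta> k u0"
  shows "u < - delta \<beta> k u0 u"
proof -
  let ?P = "Phi \<beta> k u0"
  have mono: "strict_mono_on {0..k} ?P" and anti: "strict_antimono_on {u0..0} ?P"
    using assms strict_mono_on_Phi strict_antimono_on_Phi by auto
  have "0 < ?P u0"
    using strict_antimono_on_less[OF anti, of 0 u0] assms by simp
  moreover have "0 < \<beta> / 12 * (k + u0) * (k - u0)^3"
    using assms by (intro mult_pos_pos) auto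
  then have "?P u0 < ?P k"
    using Phi_k_minus_Phi_u0[of \<beta> k u0] by linarith
  ultimately obtain v where v: "0 < v" "v < k" "?P v = ?P u0" "u1 \<beta> k u0 = v"
    using Phi_pos_branch[of \<beta> k u0 "?P u0"] assms unfolding u1_def by blast
  have "2 * \<beta> * (k + u0) / 3 * u0^3 < 0"
    using assms by (intro mult_pos_neg) (auto simp: power_less_zero_eq)
  then have "?P u0 < ?P (- u0)"
    using Phi_minus[of \<beta> k u0 u0] by linarith
  then have "v < - u0"
    using strict_mono_on_less[OF mono, of v "- u0"] v assms by simp
  have "0 < ?P u" "?P u < ?P u0"
    using strict_mono_on_less[OF mono, of 0 u] strict_mono_on_less[OF mono, of u v] v assms by auto
  then obtain w where w: "u0 < w" "w < 0" "?P w = ?P u" "delta \<beta> k u0 u = w"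
    using Phi_neg_branch[of \<beta> k u0 u0 "?P u"] assms unfolding delta_def by auto
  have "0 < 2 * \<beta> * (k + u0) / 3 * u^3"
    using assms by (intro mult_pos_pos) auto
  then have "?P (- u) < ?P u"
    using Phi_minus[of \<beta> k u0 u] by linarith
  then have "w < - u"
    using strict_antimono_on_less[OF anti, of "- u" w] w v \<open>v < - u0\<close> assms by simp
  then show ?thesis using w by simp
qed

lemma abs_delta_less:
  assumes "0 < \<beta>" "0 < k" "u0 < - k" "0 < u" "u < k"
  shows "\<bar>delta \<beta> k u0 u\<bar> < u"
proof -
  let ?P = "Phi \<beta> k u0"
  have mono: "strict_mono_on {0..k} ?P" and anti: "strict_antimono_on {u0..0} ?P"
    using assms strict_mono_on_Phi strict_antimono_on_Phi by auto
  have "0 < ?P k"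
    using strict_mono_on_less[OF mono, of 0 k] assms by simp
  moreover have "\<beta> / 12 * (k + u0) * (k - u0)^3 < 0"
    using assms by (intro mult_neg_pos mult_pos_neg) auto
  then have "?P k < ?P u0"
    using Phi_k_minus_Phi_u0[of \<beta> k u0] by linarith
  ultimately obtain z where z: "u0 < z" "z < 0" "?P z = ?P k" "w2 \<beta> k u0 = z"
    using Phi_neg_branch[of \<beta> k u0 u0 "?P k"] assms unfolding w2_def by auto
  have "0 < ?P u" "?P u < ?P z"
    using strict_mono_on_less[OF mono, of 0 u] strict_mono_on_less[OF mono, of u k] z assms by auto
  then obtain w where w: "z < w" "w < 0" "?P w = ?P u" "delta \<beta> k u0 u = w"
    using Phi_neg_branch[of \<beta> k u0 z "?P u"] z assms unfolding delta_def by auto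
  have "2 * \<beta> * (k + u0) / 3 * u^3 < 0"
    using assms by (intro mult_neg_pos divide_neg_pos mult_pos_neg) auto
  then have "?P u < ?P (- u)"
    using Phi_minus[of \<beta> k u0 u] by linarith
  then have "- u < w"
    using strict_antimono_on_less[OF anti, of w "- u"] w z assms by simp
  then show ?thesis using w by simp
qed

theorem lemma3p9:
  shows
  "(\<forall>(m::nat) (u::real) (w::real). m \<ge> 1 \<longrightarrow>
      g (4*m+1) w u - g (4*m+1) u w
        = (\<Sum>i=0..2*m-1. (4 * real m - 2 * real i) * (u*w)^i * (u^(4*m-2*i) - w^(4*m-2*i)))
    \<and> (\<Sum>i=0..2*m-1. (4 * real m - 2 * real i) * (u*w)^i * (u^(4*m-2*i) - w^(4*m-2*i)))
        = (u + w) * (\<Sum>i=0..m-1. (4 * real m - 2 - 4 * real i)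
                         * (u^(4*m-1-4*i) - w^(4*m-1-4*i)) * (u*w)^(2*i))
          + 2 * (\<Sum>i=0..m-1. (u^(4*m-4*i) - w^(4*m-4*i)) * (u*w)^(2*i))
    \<and> g (4*m+3) w u - g (4*m+3) u w
        = (\<Sum>i=0..2*m. (4 * real m + 2 - 2 * real i) * (u*w)^i * (u^(4*m+2-2*i) - w^(4*m+2-2*i)))
    \<and> (\<Sum>i=0..2*m. (4 * real m + 2 - 2 * real i) * (u*w)^i * (u^(4*m+2-2*i) - w^(4*m+2-2*i)))
        = (u + w) * (\<Sum>i=0..m-1. (4 * real m - 4 * real i)
                         * (u^(4*m+1-4*i) - w^(4*m+1-4*i)) * (u*w)^(2*i))
          + 2 * (\<Sum>i=0..m. (u^(4*m+2-4*i) - w^(4*m+2-4*i)) * (u*w)^(2*i)))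
   \<and> (\<forall>(\<beta>::real) (k::real) (u0::real) (n::nat). \<beta> > 0 \<and> k > 0 \<and> odd n \<and> n \<ge> 3 \<longrightarrow>
        ((- k < u0 \<and> u0 < 0) \<longrightarrow>
           (\<forall>u. 0 < u \<and> u < u1 \<beta> k u0 \<longrightarrow>
              g n u (delta \<beta> k u0 u) > g n (delta \<beta> k u0 u) u))
      \<and> (u0 < - k \<longrightarrow>
           (\<forall>u. 0 < u \<and> u < k \<longrightarrow>
              g n u (delta \<beta> k u0 u) < g n (delta \<beta> k u0 u) u)))"
proof (intro conjI allI impI)
  fix \<beta> k u0 :: real and n :: nat and u :: real
  assume "0 < \<beta> \<and> 0 < k \<and> odd n \<and> 3 \<le> n" "- k < u0 \<and> u0 < 0" "0 < u \<and> u < u1 \<beta> k u0"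
  then have "\<bar>- u\<bar> < - delta \<beta> k u0 u" and n: "odd n" "3 \<le> n"
    using less_minus_delta by auto
  then have "g n (- delta \<beta> k u0 u) (- u) < g n (- u) (- delta \<beta> k u0 u)"
    by (rule g_swap_less)
  moreover have "even (n - 1)" using n by simp
  ultimately show "g n u (delta \<beta> k u0 u) > g n (delta \<beta> k u0 u) u"
    by (simp add: g_minus_minus)
next
  fix \<beta> k u0 :: real and n :: nat and u :: real
  assume "0 < \<beta> \<and> 0 < k \<and> odd n \<and> 3 \<le> n" "u0 < - k" "0 < u \<and> u < k"
  then show "g n u (delta \<beta> k u0 u) < g n (delta \<beta> k u0 u) u"
    by (auto intro!: g_swap_less abs_delta_less)
qed (blast intro: g_swap_diff_4m1 g_swap_diff_4m3)+

end
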